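(* Let $c\neq 1$ be a real number with $c<1$. For every $k\ge 2$ and every sequence $(\varepsilon_1,\dots,\varepsilon_k)\in\{0,1\}^k$ with $\varepsilon_1=1$ and $\varepsilon_k=0$, one has $$I(\varepsilon_1,\varepsilon_2,\dots,\varepsilon_k)=I(1-\varepsilon_k,\dots,1-\varepsilon_2,1-\varepsilon_1).$$ In particular, $Z_c(1,2)=Z_c(3)$.
   Context: For a real parameter $c<1$, consider the differential forms on $[0,1]$ $$\omega_0(t)=\frac{dt}{t},\qquad \omega_1(t)=\frac{(1-c)\,dt}{(1-t)(1-ct)}.$$ For $\varepsilon_1,\dots,\varepsilon_k\in\{0,1\}$ with $\varepsilon_1=1$ and $\varepsilon_k=0$, define the iterated integral $$I(\varepsilon_1,\dots,\varepsilon_k)=\int_{0<t_1<\cdots<t_k<1}\omega_{\varepsilon_1}(t_1)\cdots\omega_{\varepsilon_k}(t_k).$$ For integers $r\ge1$, $k_1,\dots,k_r\ge1$ with $k_r\ge2$, define $Z_c(k_1,\dots,k_r)=I(1,0^{k_1-1},1,0^{k_2-1},\dots,1,0^{k_r-1})$, where $0^j$ denotes $j$ consecutive zeros. *)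

theory Defs
  imports "HOL-Analysis.Analysis"
begin

text \<open>The forms omega_0 = dt/t and omega_1 = (1-c) dt/((1-t)(1-ct)), as densities;
  the letter e is 0 or 1.\<close>
definition omega :: "real \<Rightarrow> nat \<Rightarrow> real \<Rightarrow> real" where
  "omega c e t = (if e = 0 then 1 / t else (1 - c) / ((1 - t) * (1 - c * t)))"

definition open_simplex :: "nat \<Rightarrow> (nat \<Rightarrow> real) set" where
  "open_simplex k = {t. (\<forall>i<k. 0 < t i \<and> t i < 1) \<and> (\<forall>i. Suc i < k \<longrightarrow> t i < t (Suc i))}"

definition iterI :: "real \<Rightarrow> nat list \<Rightarrow> real" where
  "iterI c es = (\<integral>t. indicator (open_simplex (length es)) t *
       (\<Prod>i<length es. omega c (es ! i) (t i)) \<partial>(PiM {..<length es} (\<lambda>_. lborel)))"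

definition Zc :: "real \<Rightarrow> nat list \<Rightarrow> real" where
  "Zc c ks = iterI c (concat (map (\<lambda>k. 1 # replicate (k - 1) 0) ks))"

end

theory Submission
  imports Defs "HOL-Probability.Probability"
begin

text \<open>The map phi(x) = (1 - x)/(1 - c x) is a decreasing involution of [0,1] with
  |phi'(x)| = (1 - c)/(1 - c x)^2, and it exchanges the two forms:
  omega_1(phi x) |phi'(x)| = omega_0(x) and omega_0(phi x) |phi'(x)| = omega_1(x).
  Hence the substitution t_i = phi(s_(k+1-i)), which maps the open simplex onto itself
  (phi reverses the order, reading the coordinates backwards restores it), turns the
  integrand of I(e_1,...,e_k) into that of I(1-e_k,...,1-e_1).
  Measure-theoretically, phi pushes the density |phi'| on [0,1] forward to Lebesgue
  measure on [0,1]; taking k-fold products and reversing the coordinates gives the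
  k-dimensional change of variables.\<close>

definition duality_map :: "real \<Rightarrow> real \<Rightarrow> real" where
  "duality_map c x = (1 - x) / (1 - c * x)"

definition duality_jacobian :: "real \<Rightarrow> real \<Rightarrow> real" where
  "duality_jacobian c x = (1 - c) / (1 - c * x)\<^sup>2"

lemma one_minus_mult_pos:
  fixes c x :: real
  assumes "c < 1" "0 \<le> x" "x \<le> 1"
  shows "0 < 1 - c * x"
proof (cases "c \<le> 0")
  case True
  then show ?thesis
    using assms mult_nonpos_nonneg[of c x] by linarith
next
  case False
  then show ?thesis
    using assms mult_left_le[of x c] by linarith
qed

lemma duality_map_less_iff:
  fixes c x y :: real
  assumes c: "c < 1" and x: "0 \<le> x" "x \<le> 1" and y: "0 \<le> y" "y \<le> 1"
  shows "duality_map c x < duality_map c y \<longleftrightarrow> y < x"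
proof -
  define q where "q = (1 - c) / ((1 - c * x) * (1 - c * y))"
  have dx: "0 < 1 - c * x" and dy: "0 < 1 - c * y"
    using one_minus_mult_pos c x y by auto
  then have "0 < q"
    using c by (simp add: q_def)
  have "duality_map c x - duality_map c y = (y - x) * q"
    unfolding duality_map_def q_def using dx dy by (simp add: field_simps)
  then have "duality_map c x < duality_map c y \<longleftrightarrow> (y - x) * q < 0"
    by linarith
  also have "\<dots> \<longleftrightarrow> y < x"
    using \<open>0 < q\<close> by (simp add: mult_less_0_iff)
  finally show ?thesis .
qed

lemma duality_map_0 [simp]: "duality_map c 0 = 1"
  and duality_map_1 [simp]: "c \<noteq> 1 \<Longrightarrow> duality_map c 1 = 0"
  by (auto simp: duality_map_def)

lemma duality_map_in_open_unit_iff: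
  fixes c x :: real
  assumes c: "c < 1" and x: "0 \<le> x" "x \<le> 1"
  shows "0 < duality_map c x \<and> duality_map c x < 1 \<longleftrightarrow> 0 < x \<and> x < 1"
  using duality_map_less_iff[OF c x, of 0] duality_map_less_iff[OF c _ _ x, of 1] c by auto

lemma duality_jacobian_nonneg: "c < 1 \<Longrightarrow> 0 \<le> duality_jacobian c x"
  by (simp add: duality_jacobian_def)

lemma duality_map_has_real_derivative:
  fixes c x :: real
  assumes "1 - c * x \<noteq> 0"
  shows "(duality_map c has_real_derivative - duality_jacobian c x) (at x)"
proof -
  have "((\<lambda>x. (1 - x) / (1 - c * x)) has_real_derivative
      (- 1 * (1 - c * x) - (1 - x) * - c) / ((1 - c * x) * (1 - c * x))) (at x)"
    using assms by (intro DERIV_divide derivative_eq_intros) auto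
  moreover have "(- 1 * (1 - c * x) - (1 - x) * - c) / ((1 - c * x) * (1 - c * x)) = - duality_jacobian c x"
    by (simp add: duality_jacobian_def power2_eq_square algebra_simps minus_divide_left)
  ultimately show ?thesis
    unfolding duality_map_def[abs_def] by simp
qed

lemma omega_duality_map:
  fixes c x :: real
  assumes c: "c < 1" and x: "0 < x" "x < 1" and e: "e \<in> {0, 1}"
  shows "omega c (1 - e) (duality_map c x) * duality_jacobian c x = omega c e x"
proof -
  define D where "D = 1 - c * x"
  define u where "u = 1 - c"
  have D: "D \<noteq> 0" and u: "u \<noteq> 0"
    using one_minus_mult_pos[of c x] c x by (auto simp: D_def u_def)
  have map: "duality_map c x = (1 - x) / D"
    and jac: "duality_jacobian c x = u / D\<^sup>2"
    by (simp_all add: duality_map_def duality_jacobian_def D_def u_def)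
  have "1 - duality_map c x = x * u / D"
    and "1 - c * duality_map c x = u / D"
    unfolding map using D by (simp_all add: field_simps D_def u_def)
  then have "omega c 1 (duality_map c x) * duality_jacobian c x = u / (x * u / D * (u / D)) * (u / D\<^sup>2)"
    by (simp add: omega_def jac u_def)
  also have "\<dots> = omega c 0 x"
    using D u x by (simp add: omega_def field_simps power2_eq_square)
  finally have e0: "omega c 1 (duality_map c x) * duality_jacobian c x = omega c 0 x" .
  have "omega c 0 (duality_map c x) * duality_jacobian c x = 1 / ((1 - x) / D) * (u / D\<^sup>2)"
    by (simp add: omega_def map jac)
  also have "\<dots> = u / ((1 - x) * D)"
    using D x by (simp add: field_simps power2_eq_square)
  also have "\<dots> = omega c 1 x"
    by (simp add: omega_def D_def u_def)
  finally show ?thesis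
    using e e0 by auto
qed

lemma duality_map_measurable [measurable]: "duality_map c \<in> borel_measurable borel"
  unfolding duality_map_def by measurable

lemma duality_jacobian_measurable [measurable]: "duality_jacobian c \<in> borel_measurable borel"
  unfolding duality_jacobian_def by measurable

lemma omega_measurable [measurable]: "omega c e \<in> borel_measurable borel"
  unfolding omega_def by measurable

lemma prod_indicator_eq_indicator_Pi:
  "finite I \<Longrightarrow> (\<Prod>i\<in>I. indicator (A i) (x i) :: 'b :: comm_semiring_1) = indicator (Pi I A) x"
  by (induction I rule: finite_induct) (auto simp: indicator_def)

lemma product_sigma_finite_const: "sigma_finite_measure M \<Longrightarrow> product_sigma_finite (\<lambda>_. M)"
  by (simp add: product_sigma_finite_def)

lemma PiM_density:
  fixes M :: "'i \<Rightarrow> 'a measure" and f :: "'i \<Rightarrow> 'a \<Rightarrow> ennreal"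
  assumes I: "finite I" and "product_sigma_finite M"
    and "product_sigma_finite (\<lambda>i. density (M i) (f i))"
    and f[measurable]: "\<And>i. i \<in> I \<Longrightarrow> f i \<in> borel_measurable (M i)"
  shows "PiM I (\<lambda>i. density (M i) (f i)) = density (PiM I M) (\<lambda>x. \<Prod>i\<in>I. f i (x i))"
proof -
  interpret M: product_sigma_finite M by fact
  interpret D: product_sigma_finite "\<lambda>i. density (M i) (f i)" by fact
  have prod_meas[measurable]: "(\<lambda>x. \<Prod>i\<in>I. f i (x i)) \<in> borel_measurable (PiM I M)"
    by measurable
  show ?thesis
  proof (rule sym, rule D.PiM_eqI[OF I])
    show "sets (density (PiM I M) (\<lambda>x. \<Prod>i\<in>I. f i (x i))) = sets (PiM I (\<lambda>i. density (M i) (f i)))"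
      by (auto intro!: sets_PiM_cong)
  next
    fix A assume A: "\<And>i. i \<in> I \<Longrightarrow> A i \<in> sets (density (M i) (f i))"
    then have A_sets[measurable]: "Pi\<^sub>E I A \<in> sets (PiM I M)"
      by (auto intro!: sets_PiM_I_finite I)
    have "emeasure (density (PiM I M) (\<lambda>x. \<Prod>i\<in>I. f i (x i))) (Pi\<^sub>E I A)
        = (\<integral>\<^sup>+x. (\<Prod>i\<in>I. f i (x i) * indicator (A i) (x i)) \<partial>PiM I M)"
      unfolding emeasure_density[OF prod_meas A_sets]
    proof (intro nn_integral_cong)
      fix x assume "x \<in> space (PiM I M)"
      then have "indicator (Pi\<^sub>E I A) x = (indicator (Pi I A) x :: ennreal)"
        by (simp add: space_PiM PiE_def indicator_def)
      then show "(\<Prod>i\<in>I. f i (x i)) * indicator (Pi\<^sub>E I A) x = (\<Prod>i\<in>I. f i (x i) * indicator (A i) (x i))"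
        by (simp add: prod.distrib prod_indicator_eq_indicator_Pi[OF I])
    qed
    also have "\<dots> = (\<Prod>i\<in>I. \<integral>\<^sup>+y. f i y * indicator (A i) y \<partial>M i)"
      using A by (intro M.product_nn_integral_prod I) auto
    also have "\<dots> = (\<Prod>i\<in>I. emeasure (density (M i) (f i)) (A i))"
      using A by (auto simp: emeasure_density intro!: prod.cong)
    finally show "emeasure (density (PiM I M) (\<lambda>x. \<Prod>i\<in>I. f i (x i))) (Pi\<^sub>E I A)
        = (\<Prod>i\<in>I. emeasure (density (M i) (f i)) (A i))" .
  qed
qed

definition unit_interval_measure :: "real measure" where
  "unit_interval_measure = density lborel (indicator {0..1})"

definition duality_measure :: "real \<Rightarrow> real measure" where
  "duality_measure c = density lborel (\<lambda>x. ennreal (duality_jacobian c x) * indicator {0..1} x)"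

lemma sets_unit_interval_measure [measurable_cong, simp]: "sets unit_interval_measure = sets borel"
  by (simp add: unit_interval_measure_def)

lemma sets_duality_measure [measurable_cong, simp]: "sets (duality_measure c) = sets borel"
  by (simp add: duality_measure_def)

lemma distr_duality_measure:
  fixes c :: real
  assumes c: "c < 1"
  shows "distr (duality_measure c) unit_interval_measure (duality_map c) = unit_interval_measure"
proof (rule measure_eqI)
  fix B assume "B \<in> sets (distr (duality_measure c) unit_interval_measure (duality_map c))"
  then have B[measurable]: "B \<in> sets borel"
    by simp
  txt \<open>The substitution rule of the library needs an increasing map: substitute
    g y = phi(1 - y), which maps [0,1] onto itself increasingly, then reflect y to 1 - y.\<close>
  define g where "g y = duality_map c (1 - y)" for y
  have den: "1 - c * (1 - y) \<noteq> 0" if "y \<in> {0..1}" for y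
    using one_minus_mult_pos[OF c, of "1 - y"] that by auto
  have g_deriv: "(g has_real_derivative duality_jacobian c (1 - y)) (at y)" if "y \<in> {0..1}" for y
  proof -
    have "((\<lambda>y. duality_map c (1 - y)) has_real_derivative - duality_jacobian c (1 - y) * -1) (at y)"
      using duality_map_has_real_derivative[OF den[OF that]]
      by (rule DERIV_chain2[where f = "duality_map c" and g = "\<lambda>y. 1 - y" and x = y])
        (auto intro!: derivative_eq_intros)
    then show ?thesis
      by (simp add: g_def[abs_def])
  qed
  have jac_cont: "continuous_on {0..1} (\<lambda>y. duality_jacobian c (1 - y))"
    unfolding duality_jacobian_def using den by (intro continuous_intros) auto
  have "emeasure unit_interval_measure B = (\<integral>\<^sup>+y. indicator B y * indicator {g 0..g 1} y \<partial>lborel)"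
    using c by (simp add: unit_interval_measure_def emeasure_density g_def mult.commute)
  also have "\<dots> = (\<integral>\<^sup>+y. indicator B (g y) * ennreal (duality_jacobian c (1 - y)) * indicator {0..1} y \<partial>lborel)"
    using c by (intro nn_integral_substitution_aux g_deriv jac_cont) (auto simp: duality_jacobian_def)
  also have "\<dots> = (\<integral>\<^sup>+x. indicator B (g (1 + (-1) * x)) * ennreal (duality_jacobian c (1 - (1 + (-1) * x)))
      * indicator {0..1} (1 + (-1) * x) \<partial>lborel)"
    by (subst nn_integral_real_affine[where c = "-1" and t = 1]) (auto simp: g_def)
  also have "\<dots> = (\<integral>\<^sup>+x. ennreal (duality_jacobian c x) * indicator {0..1} x
      * indicator (duality_map c -` B) x \<partial>lborel)"
    by (intro nn_integral_cong) (auto simp: g_def indicator_def)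
  also have "\<dots> = emeasure (distr (duality_measure c) unit_interval_measure (duality_map c)) B"
  proof -
    have "duality_map c -` B \<in> sets borel"
      using measurable_sets_borel[OF duality_map_measurable B] .
    then show ?thesis
      by (simp add: emeasure_distr duality_measure_def emeasure_density)
  qed
  finally show "emeasure (distr (duality_measure c) unit_interval_measure (duality_map c)) B
      = emeasure unit_interval_measure B" ..
qed simp

lemma prob_space_unit_interval_measure: "prob_space unit_interval_measure"
  by (rule prob_spaceI) (simp add: unit_interval_measure_def emeasure_density)

lemma prob_space_duality_measure:
  assumes "c < 1"
  shows "prob_space (duality_measure c)"
proof (rule prob_spaceI)
  have "emeasure (duality_measure c) (space (duality_measure c))
      = emeasure (distr (duality_measure c) unit_interval_measure (duality_map c)) (space unit_interval_measure)"
    by (subst emeasure_distr) (simp_all add: unit_interval_measure_def duality_measure_def)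
  then show "emeasure (duality_measure c) (space (duality_measure c)) = 1"
    using prob_space.emeasure_space_1[OF prob_space_unit_interval_measure]
    by (simp add: distr_duality_measure[OF assms])
qed

lemma PiM_unit_interval_measure:
  assumes "finite I"
  shows "PiM I (\<lambda>_. unit_interval_measure)
    = density (PiM I (\<lambda>_. lborel)) (\<lambda>t. ennreal (\<Prod>i\<in>I. indicator {0..1} (t i)))"
  unfolding unit_interval_measure_def
  using assms prob_space_unit_interval_measure
  by (subst PiM_density[where M = "\<lambda>_. lborel" and f = "\<lambda>_. indicator {0..1}"])
    (auto intro!: product_sigma_finite_const lborel.sigma_finite_measure_axioms prob_space_imp_sigma_finite
      simp: unit_interval_measure_def prod_ennreal[symmetric] ennreal_indicator)

lemma PiM_duality_measure:
  assumes "c < 1" "finite I"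
  shows "PiM I (\<lambda>_. duality_measure c)
    = density (PiM I (\<lambda>_. lborel)) (\<lambda>t. ennreal (\<Prod>i\<in>I. duality_jacobian c (t i) * indicator {0..1} (t i)))"
  unfolding duality_measure_def
  using assms prob_space_duality_measure[OF assms(1)]
  by (subst PiM_density[where M = "\<lambda>_. lborel"])
    (auto intro!: product_sigma_finite_const lborel.sigma_finite_measure_axioms prob_space_imp_sigma_finite
      simp: duality_measure_def prod_ennreal[symmetric] ennreal_mult ennreal_indicator duality_jacobian_nonneg)

definition simplex_duality :: "real \<Rightarrow> nat \<Rightarrow> (nat \<Rightarrow> real) \<Rightarrow> nat \<Rightarrow> real" where
  "simplex_duality c k t = (\<lambda>i\<in>{..<k}. duality_map c (t (k - Suc i)))"

lemma distr_simplex_duality: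
  fixes c :: real
  assumes c: "c < 1"
  shows "distr (PiM {..<k} (\<lambda>_. duality_measure c)) (PiM {..<k} (\<lambda>_. unit_interval_measure))
      (simplex_duality c k) = PiM {..<k} (\<lambda>_. unit_interval_measure)"
proof -
  let ?K = "{..<k}"
  let ?W = "PiM ?K (\<lambda>_. duality_measure c)" and ?U = "PiM ?K (\<lambda>_. unit_interval_measure)"
  define reverse :: "(nat \<Rightarrow> real) \<Rightarrow> nat \<Rightarrow> real" where "reverse t = (\<lambda>i\<in>?K. t (k - Suc i))" for t
  have [measurable]: "compose ?K (duality_map c) \<in> ?W \<rightarrow>\<^sub>M ?U" "reverse \<in> ?U \<rightarrow>\<^sub>M ?U"
    unfolding compose_def reverse_def by (auto intro!: measurable_restrict)
  have "simplex_duality c k = reverse \<circ> compose ?K (duality_map c)"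
    by (auto simp: simplex_duality_def reverse_def compose_def fun_eq_iff)
  then have "distr ?W ?U (simplex_duality c k) = distr (distr ?W ?U (compose ?K (duality_map c))) ?U reverse"
    by (simp add: distr_distr)
  also have "distr ?W ?U (compose ?K (duality_map c)) = ?U"
    using prob_space_duality_measure[OF c] prob_space_unit_interval_measure
    by (subst distr_PiM_finite_prob_space) (auto intro!: product_prob_spaceI simp: distr_duality_measure[OF c])
  also have "distr ?U ?U reverse = ?U"
    unfolding reverse_def using prob_space_unit_interval_measure
    by (intro distr_PiM_reindex) (auto simp: inj_on_def)
  finally show ?thesis .
qed

lemma all_lessThan_reverse_iff: "(\<forall>i<k. P (k - Suc i)) \<longleftrightarrow> (\<forall>i<k. P i)"
proof
  assume "\<forall>i<k. P (k - Suc i)"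
  then show "\<forall>i<k. P i"
    by (metis Suc_diff_Suc diff_Suc_less diff_diff_cancel less_imp_le_nat gr_implies_not0 not_gr0)
qed auto

lemma simplex_duality_in_open_simplex_iff:
  fixes c :: real
  assumes c: "c < 1" and t: "\<forall>j<k. 0 \<le> t j \<and> t j \<le> 1"
  shows "simplex_duality c k t \<in> open_simplex k \<longleftrightarrow> t \<in> open_simplex k"
proof -
  let ?T = "simplex_duality c k t"
  have "(\<forall>i<k. 0 < ?T i \<and> ?T i < 1) \<longleftrightarrow> (\<forall>i<k. 0 < t (k - Suc i) \<and> t (k - Suc i) < 1)"
    using t duality_map_in_open_unit_iff[OF c] by (auto simp: simplex_duality_def)
  also have "\<dots> \<longleftrightarrow> (\<forall>i<k. 0 < t i \<and> t i < 1)"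
    by (rule all_lessThan_reverse_iff)
  finally have bounds: "(\<forall>i<k. 0 < ?T i \<and> ?T i < 1) \<longleftrightarrow> (\<forall>i<k. 0 < t i \<and> t i < 1)" .
  have "(\<forall>i. Suc i < k \<longrightarrow> ?T i < ?T (Suc i))
      \<longleftrightarrow> (\<forall>i<k - 1. t (k - 1 - Suc i) < t (Suc (k - 1 - Suc i)))"
    using t duality_map_less_iff[OF c]
    by (auto simp: simplex_duality_def Suc_diff_Suc less_diff_conv)
  also have "\<dots> \<longleftrightarrow> (\<forall>i<k - 1. t i < t (Suc i))"
    by (rule all_lessThan_reverse_iff)
  finally have order: "(\<forall>i. Suc i < k \<longrightarrow> ?T i < ?T (Suc i)) \<longleftrightarrow> (\<forall>i. Suc i < k \<longrightarrow> t i < t (Suc i))"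
    by (simp add: less_diff_conv)
  show ?thesis
    unfolding open_simplex_def using bounds order by simp
qed

definition simplex_integrand :: "real \<Rightarrow> nat list \<Rightarrow> (nat \<Rightarrow> real) \<Rightarrow> real" where
  "simplex_integrand c es t = indicator (open_simplex (length es)) t * (\<Prod>i<length es. omega c (es ! i) (t i))"

lemma iterI_eq_integral_simplex_integrand:
  "iterI c es = integral\<^sup>L (PiM {..<length es} (\<lambda>_. lborel)) (simplex_integrand c es)"
  by (simp add: iterI_def simplex_integrand_def[abs_def])

lemma simplex_integrand_measurable [measurable]:
  "simplex_integrand c es \<in> borel_measurable (PiM {..<length es} (\<lambda>_. lborel))"
proof -
  have simplex: "open_simplex k = {t. (\<forall>i\<in>{..<k}. 0 < t i \<and> t i < 1) \<and> (\<forall>i\<in>{..<k - 1}. t i < t (Suc i))}" for k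
    by (auto simp: open_simplex_def less_diff_conv)
  show ?thesis
    unfolding simplex_integrand_def[abs_def] indicator_def simplex by measurable
qed

lemma duality_jacobian_mult_simplex_integrand:
  fixes c :: real
  assumes c: "c < 1" and es: "set es \<subseteq> {0, 1}"
  shows "(\<Prod>j<length es. duality_jacobian c (t j) * indicator {0..1} (t j))
      * simplex_integrand c (rev (map (\<lambda>e. 1 - e) es)) (simplex_duality c (length es) t)
    = simplex_integrand c es t"
proof -
  let ?k = "length es"
  let ?T = "simplex_duality c ?k t"
  show ?thesis
  proof (cases "\<forall>j<?k. 0 \<le> t j \<and> t j \<le> 1")
    case False
    then obtain j where j: "j < ?k" "\<not> (0 \<le> t j \<and> t j \<le> 1)"
      by auto
    then have "(\<Prod>j<?k. duality_jacobian c (t j) * indicator {0..1} (t j)) = 0"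
      by (intro prod_zero bexI[where x = j]) (auto simp: indicator_def)
    moreover have "t \<notin> open_simplex ?k"
      using j by (auto simp: open_simplex_def)
    ultimately show ?thesis
      by (simp add: simplex_integrand_def)
  next
    case cube: True
    show ?thesis
    proof (cases "t \<in> open_simplex ?k")
      case False
      then show ?thesis
        using simplex_duality_in_open_simplex_iff[OF c cube] by (simp add: simplex_integrand_def)
    next
      case True
      then have t: "0 < t j" "t j < 1" if "j < ?k" for j
        using that by (auto simp: open_simplex_def)
      have "simplex_integrand c (rev (map (\<lambda>e. 1 - e) es)) ?T
          = (\<Prod>i<?k. omega c (1 - es ! (?k - Suc i)) (duality_map c (t (?k - Suc i))))"
        using True simplex_duality_in_open_simplex_iff[OF c cube]
        by (auto simp: simplex_integrand_def simplex_duality_def rev_nth intro!: prod.cong)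
      also have "\<dots> = (\<Prod>j<?k. omega c (1 - es ! j) (duality_map c (t j)))"
        by (rule prod.nat_diff_reindex)
      finally have "(\<Prod>j<?k. duality_jacobian c (t j) * indicator {0..1} (t j))
          * simplex_integrand c (rev (map (\<lambda>e. 1 - e) es)) ?T
        = (\<Prod>j<?k. omega c (1 - es ! j) (duality_map c (t j)) * duality_jacobian c (t j))"
        using cube by (simp add: prod.distrib[symmetric] mult.commute)
      also have "\<dots> = (\<Prod>j<?k. omega c (es ! j) (t j))"
        using es t nth_mem by (intro prod.cong refl omega_duality_map[OF c]) fastforce+
      finally show ?thesis
        using True by (simp add: simplex_integrand_def)
    qed
  qed
qed

text \<open>No convergence hypothesis is needed: the change of variables identifies the two
  integrands, so both Bochner integrals are 0 when the integrals diverge.\<close>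

lemma iterI_duality:
  fixes c :: real
  assumes c: "c < 1" and es: "set es \<subseteq> {0, 1}"
  shows "iterI c es = iterI c (rev (map (\<lambda>e. 1 - e) es))"
proof -
  let ?es' = "rev (map (\<lambda>e. 1 - e) es)" and ?k = "length es"
  let ?L = "PiM {..<?k} (\<lambda>_. lborel)" and ?U = "PiM {..<?k} (\<lambda>_. unit_interval_measure)"
    and ?W = "PiM {..<?k} (\<lambda>_. duality_measure c)"
  let ?F = "simplex_integrand c ?es'" and ?T = "simplex_duality c ?k"
  have F_L: "?F \<in> borel_measurable ?L" and [measurable]: "?F \<in> borel_measurable ?U"
    using simplex_integrand_measurable[of c ?es'] by (simp_all cong: measurable_cong_sets sets_PiM_cong)
  have [measurable]: "?T \<in> ?W \<rightarrow>\<^sub>M ?U"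
    unfolding simplex_duality_def by (auto intro!: measurable_restrict)
  have "?T \<in> ?L \<rightarrow>\<^sub>M ?L"
    unfolding simplex_duality_def by (auto intro!: measurable_restrict)
  from measurable_compose[OF this F_L] have FT_L: "(\<lambda>t. ?F (?T t)) \<in> borel_measurable ?L" .
  have "iterI c ?es' = integral\<^sup>L ?L ?F"
    by (simp add: iterI_eq_integral_simplex_integrand)
  also have "\<dots> = integral\<^sup>L ?L (\<lambda>t. (\<Prod>j<?k. indicator {0..1} (t j)) * ?F t)"
    by (intro Bochner_Integration.integral_cong refl)
      (auto simp: simplex_integrand_def open_simplex_def indicator_def less_imp_le)
  also have "\<dots> = integral\<^sup>L ?U ?F"
    using integral_density[OF F_L, of "\<lambda>t. \<Prod>j<?k. indicator {0..1} (t j)"]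
    by (simp add: PiM_unit_interval_measure AE_I2 prod_nonneg)
  also have "\<dots> = integral\<^sup>L (distr ?W ?U ?T) ?F"
    by (simp add: distr_simplex_duality[OF c])
  also have "\<dots> = integral\<^sup>L ?W (\<lambda>t. ?F (?T t))"
    by (rule integral_distr) measurable
  also have "\<dots> = integral\<^sup>L ?L (\<lambda>t. (\<Prod>j<?k. duality_jacobian c (t j) * indicator {0..1} (t j)) * ?F (?T t))"
    using integral_density[OF FT_L, of "\<lambda>t. \<Prod>j<?k. duality_jacobian c (t j) * indicator {0..1} (t j)"]
    by (simp add: PiM_duality_measure[OF c] AE_I2 prod_nonneg duality_jacobian_nonneg[OF c])
  also have "\<dots> = iterI c es"
    unfolding duality_jacobian_mult_simplex_integrand[OF c es]
    by (simp add: iterI_eq_integral_simplex_integrand)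
  finally show ?thesis ..
qed

theorem mainTheorem2:
  fixes c :: real
  assumes "c \<noteq> 1" and "c < 1"
  shows "(\<forall>es :: nat list. length es \<ge> 2 \<and> set es \<subseteq> {0, 1} \<and> hd es = 1 \<and> last es = 0
            \<longrightarrow> iterI c es = iterI c (rev (map (\<lambda>e. 1 - e) es)))
         \<and> Zc c [1, 2] = Zc c [3]"
proof
  show "\<forall>es :: nat list. length es \<ge> 2 \<and> set es \<subseteq> {0, 1} \<and> hd es = 1 \<and> last es = 0
            \<longrightarrow> iterI c es = iterI c (rev (map (\<lambda>e. 1 - e) es))"
    using iterI_duality[OF assms(2)] by blast
  have "iterI c [1, 1, 0] = iterI c (rev (map (\<lambda>e. 1 - e) [1, 1, 0]))"
    by (rule iterI_duality[OF assms(2)]) auto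
  then show "Zc c [1, 2] = Zc c [3]"
    by (simp add: Zc_def numeral_eq_Suc)
qed

end
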